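(* Let $m,n$ be natural numbers. If the $n$-th term $G(n,m)$ of the Goodstein sequence $G(m)$ is $0$, then $n=2(2n_2+1)$ for some natural number $n_2$ such that the hereditary representation of $G(n_2-1,m)$ in base $n_2$ is $2\cdot n_2^{1}+0\cdot n_2^{0}$.
   Context: For a natural number base $b>1$, the hereditary representation $m\langle b\rangle$ of $m$ is $\sum_{i=0}^{l} a_i b^{i}$ with $0\le a_i<b$, $a_l\ne0$, each exponent itself written in hereditary representation in base $b$, recursively. $m\langle b\rangle''$ is obtained by syntactically replacing every $b$ by $b+1$ in $m\langle b\rangle$. The Goodstein sequence $G(m)=\{m, m''-1, (m''-1)''-1,\dots\}$ starts from $m$ in base $2$; its $n$-th term is $G(n,m)$, with $G(1,m)=m$ in base $2$, $G(k,m)$ written in base $k+1$, and $G(k+1,m)=G(k,m)\langle k+1\rangle''-1$.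
   Formalization: m is at least 4, and n is the first index at which the Goodstein sequence reaches 0, that is, $G(k,m) \ne 0$ for every $1 \le k < n$. Apart from conventions, each condition added here is assumed in the paper as well or is needed for the statement above to hold. *)

theory Defs
  imports Main
begin

fun digits :: "nat \<Rightarrow> nat \<Rightarrow> nat list" where
  "digits b m = (if m = 0 \<or> b < 2 then [] else (m mod b) # digits b (m div b))"

lemma length_digits_le: "length (digits b m) \<le> m"
proof (induction b m rule: digits.induct)
  case (1 b m)
  show ?case
  proof (cases "m = 0 \<or> b < 2")
    case True then show ?thesis by simp
  next
    case False
    then have "m div b < m" by simp
    with 1 False show ?thesis by simp
  qed
qed

text \<open>Hereditary representation: a node is the list of pairs (a_i, exponent i in
hereditary representation), for i = 0..l.\<close>
datatype hrep = HSum "(nat \<times> hrep) list"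

function hrep_of :: "nat \<Rightarrow> nat \<Rightarrow> hrep" where
  "hrep_of b m = HSum (map (\<lambda>i. (digits b m ! i, hrep_of b i)) [0..<length (digits b m)])"
  by auto
termination
proof (relation "measure snd")
  show "wf (measure snd)" by simp
next
  fix b m i
  assume "i \<in> set [0..<length (digits b m)]"
  then have "i < length (digits b m)" by simp
  also have "\<dots> \<le> m" by (rule length_digits_le)
  finally show "((b, i), (b, m)) \<in> measure snd" by simp
qed

text \<open>Evaluate a hereditary representation with base c (syntactic replacement of b by c).\<close>
fun heval :: "nat \<Rightarrow> hrep \<Rightarrow> nat" where
  "heval c (HSum xs) = sum_list (map (\<lambda>(a, e). a * c ^ heval c e) xs)"

definition bump :: "nat \<Rightarrow> nat \<Rightarrow> nat" where
  "bump b m = heval (b + 1) (hrep_of b m)"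

text \<open>Goodstein sequence, 1-indexed: goodstein 1 m = m; G(k,m) is written in base k+1 and
G(k+1,m) = G(k,m)<k+1>'' - 1. Index 0 is junk (= m). Natural-number subtraction means
the sequence stays 0 once it reaches 0.\<close>
fun goodstein :: "nat \<Rightarrow> nat \<Rightarrow> nat" where
  "goodstein 0 m = m"
| "goodstein (Suc 0) m = m"
| "goodstein (Suc (Suc k)) m = bump (k + 2) (goodstein (Suc k) m) - 1"

end

theory Submission
  imports Defs
begin

(* Below the square of its base, a term of the sequence is an ordinary two-digit numeral and a
   Goodstein step is plain arithmetic on the two digits; at or above the square, bumping a number
   of at least b^2 still gives at least (b+1)^2.  Since the sequence reaches 0, it enters the
   two-digit region at some index K exactly at (K+1)^2 - 1, with digits (K, K) in base K+1.
   From a(k+1) + c the units digit counts down while the base grows; at c = 0 a borrow gives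
   (a-1)(k+2) + (k+1), so leading digit a with zero units at index k becomes leading digit a-1
   with zero units at index 2k+2.  Iterating brings the leading digit down to 2 at some index j,
   G(j) = 2(j+1), and the remaining countdown ends exactly at index 4j+6 = 2(2(j+1)+1). *)

declare digits.simps [simp del] hrep_of.simps [simp del]

lemma digits_0 [simp]: "digits b 0 = []"
  by (simp add: digits.simps)

lemma digits_Cons: "m \<noteq> 0 \<Longrightarrow> 2 \<le> b \<Longrightarrow> digits b m = m mod b # digits b (m div b)"
  by (simp add: digits.simps)

lemma digits_one_digit: "0 < c \<Longrightarrow> c < b \<Longrightarrow> digits b c = [c]"
  by (simp add: digits_Cons)

lemma digits_two_digits:
  assumes "0 < a" "a < b" "c < b"
  shows "digits b (a * b + c) = [c, a]"
proof -
  have "(a * b + c) mod b = c" "(a * b + c) div b = a"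
    using assms by auto
  then show ?thesis
    using assms by (simp add: digits_Cons digits_one_digit)
qed

lemma horner_sum_digits: "2 \<le> b \<Longrightarrow> horner_sum (\<lambda>d. d) b (digits b v) = v"
proof (induction b v rule: digits.induct)
  case (1 b v)
  then show ?case
    by (cases "v = 0") (simp_all add: digits_Cons)
qed

lemma horner_sum_mono_base:
  "b \<le> c \<Longrightarrow> horner_sum (\<lambda>d. d) b ds \<le> horner_sum (\<lambda>d. d) c (ds :: nat list)"
  by (induction ds) (auto intro: add_mono mult_le_mono)

lemma power_le_horner_sum_digits:
  "2 \<le> b \<Longrightarrow> 1 \<le> c \<Longrightarrow> b ^ e \<le> v \<Longrightarrow>
    c ^ e \<le> horner_sum (\<lambda>d. d) c (digits b v)"
proof (induction b v arbitrary: e rule: digits.induct)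
  case (1 b v)
  have "0 < b ^ e" using "1.prems"(1) by simp
  then have "v \<noteq> 0" using "1.prems"(3) by linarith
  then have horner_v: "horner_sum (\<lambda>d. d) c (digits b v)
      = v mod b + c * horner_sum (\<lambda>d. d) c (digits b (v div b))"
    using "1.prems"(1) by (simp add: digits_Cons)
  show ?case
  proof (cases e)
    case 0
    show ?thesis
    proof (cases "v div b = 0")
      case True
      then have "v mod b = v" using "1.prems"(1) by (simp add: div_eq_0_iff)
      with \<open>v \<noteq> 0\<close> show ?thesis using horner_v 0 by simp
    next
      case False
      then have "1 \<le> horner_sum (\<lambda>d. d) c (digits b (v div b))"
        using "1.IH"[of 0] \<open>v \<noteq> 0\<close> "1.prems"(1,2) by simp
      then have "1 \<le> c * horner_sum (\<lambda>d. d) c (digits b (v div b))"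
        using "1.prems"(2) by simp
      then show ?thesis unfolding horner_v 0 power_0 by linarith
    qed
  next
    case (Suc e')
    have "b ^ e' * b \<le> v" using "1.prems"(3) Suc by (simp add: mult.commute)
    then have "b ^ e' \<le> v div b" using "1.prems"(1) by (simp add: less_eq_div_iff_mult_less_eq)
    then have "c ^ e' \<le> horner_sum (\<lambda>d. d) c (digits b (v div b))"
      using "1.IH" \<open>v \<noteq> 0\<close> "1.prems"(1,2) by simp
    then have "c * c ^ e' \<le> c * horner_sum (\<lambda>d. d) c (digits b (v div b))"
      by (rule mult_le_mono2)
    then show ?thesis unfolding horner_v Suc power_Suc by linarith
  qed
qed

lemma bump_eq_sum:
  "bump b v = (\<Sum>i = 0..<length (digits b v). digits b v ! i * (b + 1) ^ bump b i)"
  unfolding bump_def by (subst hrep_of.simps) (simp add: comp_def sum_list_sum_nth)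

lemma bump_0 [simp]: "bump b 0 = 0"
  by (subst bump_eq_sum) simp

lemma horner_sum_le_bump:
  assumes "\<forall>i < length (digits b v). i \<le> bump b i"
  shows "horner_sum (\<lambda>d. d) (b + 1) (digits b v) \<le> bump b v"
  unfolding bump_eq_sum[of b v] horner_sum_eq_sum
  using assms by (intro sum_mono mult_le_mono2 power_increasing) auto

lemma le_bump: "2 \<le> b \<Longrightarrow> v \<le> bump b v"
proof (induction v rule: less_induct)
  case (less v)
  have "\<forall>i < length (digits b v). i \<le> bump b i"
    using less length_digits_le[of b v] by simp
  then have "horner_sum (\<lambda>d. d) (b + 1) (digits b v) \<le> bump b v"
    by (rule horner_sum_le_bump)
  moreover have "v \<le> horner_sum (\<lambda>d. d) (b + 1) (digits b v)"
    using horner_sum_mono_base[of b "b + 1" "digits b v"] horner_sum_digits[of b v] less.prems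
    by simp
  ultimately show ?case by simp
qed

lemma power_le_bump:
  assumes "2 \<le> b" "b ^ e \<le> v"
  shows "(b + 1) ^ e \<le> bump b v"
proof -
  have "(b + 1) ^ e \<le> horner_sum (\<lambda>d. d) (b + 1) (digits b v)"
    using assms by (intro power_le_horner_sum_digits) simp_all
  also have "\<dots> \<le> bump b v"
    using assms(1) le_bump by (intro horner_sum_le_bump) blast
  finally show ?thesis .
qed

lemma bump_one_digit: "c < b \<Longrightarrow> bump b c = c"
  by (cases "c = 0") (simp_all add: bump_eq_sum[of b c] digits_one_digit)

lemma bump_two_digits:
  assumes "2 \<le> b" "a < b" "c < b"
  shows "bump b (a * b + c) = a * (b + 1) + c"
proof (cases "a = 0")
  case True
  then show ?thesis using assms(3) by (simp add: bump_one_digit)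
next
  case False
  have "bump b 1 = 1" using assms(1) by (simp add: bump_one_digit)
  moreover have "{0..<length [c, a]} = {0, 1}" by auto
  ultimately show ?thesis
    using False assms by (simp add: bump_eq_sum[of b "a * b + c"] digits_two_digits)
qed

lemma hrep_of_two_digits:
  assumes "0 < a" "a < b" "c < b"
  shows "hrep_of b (a * b + c) = HSum [(c, hrep_of b 0), (a, hrep_of b 1)]"
  using assms by (subst hrep_of.simps) (simp add: digits_two_digits upt_rec)

lemma goodstein_Suc: "1 \<le> k \<Longrightarrow> goodstein (Suc k) m = bump (Suc k) (goodstein k m) - 1"
  by (cases k) simp_all

declare goodstein.simps(3) [simp del]

lemma goodstein_zero_stays:
  assumes "1 \<le> k" "goodstein k m = 0" "k \<le> l"
  shows "goodstein l m = 0"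
  using assms(3)
proof (induction l rule: dec_induct)
  case base
  then show ?case using assms(2) .
next
  case (step l)
  then show ?case using assms(1) by (simp add: goodstein_Suc)
qed

lemma goodstein_square_bound:
  assumes "1 \<le> k" "(k + 1) ^ 2 \<le> goodstein k m"
  shows "(k + 2) ^ 2 - 1 \<le> goodstein (Suc k) m"
  using power_le_bump[of "k + 1" 2 "goodstein k m"] assms by (simp add: goodstein_Suc)

lemma goodstein_enters_two_digits:
  assumes "4 \<le> m" "goodstein n m = 0"
  shows "\<exists>K \<ge> 2. goodstein K m = K * (K + 1) + K"
proof -
  define below where "below i \<longleftrightarrow> goodstein (i + 1) m < (i + 2) ^ 2" for i
  have "n \<noteq> 0" using assms by (cases n) simp_all
  then have "below (n - 1)" using assms(2) by (simp add: below_def)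
  moreover have "\<not> below 0" using assms(1) by (simp add: below_def power2_eq_square)
  ultimately obtain k where "\<not> below k" "below (Suc k)"
    using ex_least_nat_less[of below] by blast
  then have "(k + 2) ^ 2 \<le> goodstein (k + 1) m" "goodstein (k + 2) m < (k + 3) ^ 2"
    by (simp_all add: below_def eval_nat_numeral)
  then have "goodstein (k + 2) m = (k + 3) ^ 2 - 1"
    using goodstein_square_bound[of "k + 1" m] by (simp add: numeral_eq_Suc)
  then have "goodstein (k + 2) m = (k + 2) * (k + 2 + 1) + (k + 2)"
    by (simp add: power2_eq_square algebra_simps)
  then show ?thesis by (intro exI[of _ "k + 2"]) simp
qed

lemma goodstein_countdown:
  assumes "1 \<le> k" "goodstein k m = a * (k + 1) + (c + d)" "a < k + 1" "c + d < k + 1"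
  shows "goodstein (k + d) m = a * (k + 1 + d) + c"
  using assms(2,4)
proof (induction d arbitrary: c)
  case 0
  then show ?case by simp
next
  case (Suc d)
  then have "goodstein (k + d) m = a * Suc (k + d) + Suc c"
    using Suc.IH[of "Suc c"] by simp
  moreover have "bump (Suc (k + d)) (a * Suc (k + d) + Suc c) = a * (Suc (k + d) + 1) + Suc c"
    using assms(1,3) Suc.prems(2) by (intro bump_two_digits) simp_all
  ultimately show ?case
    using assms(1) by (simp add: goodstein_Suc)
qed

lemma goodstein_borrow_countdown:
  assumes "1 \<le> k" "goodstein k m = a * (k + 1)" "0 < a" "a \<le> k" "c + d = k + 1"
  shows "goodstein (k + 1 + d) m = (a - 1) * (k + 2 + d) + c"
proof -
  have "goodstein (k + 1) m = a * (k + 2) - 1"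
    using assms(1-4) bump_two_digits[of "k + 1" a 0] by (simp add: goodstein_Suc)
  also have "\<dots> = (a - 1) * (k + 1 + 1) + (c + d)"
    using assms(3,5) by (cases a) simp_all
  finally show ?thesis
    using assms goodstein_countdown[of "k + 1" m "a - 1" c d] by (simp add: add.assoc)
qed

lemma goodstein_lead_digit_decrease:
  assumes "1 \<le> k" "goodstein k m = a * (k + 1)" "0 < a" "a \<le> k"
  shows "goodstein (2 * k + 2) m = (a - 1) * (2 * k + 3)"
proof -
  have "goodstein (k + 1 + (k + 1)) m = (a - 1) * (k + 2 + (k + 1)) + 0"
    using assms by (intro goodstein_borrow_countdown) simp_all
  moreover have "k + 1 + (k + 1) = 2 * k + 2" "k + 2 + (k + 1) = 2 * k + 3"
    by simp_all
  ultimately show ?thesis by (metis add.right_neutral)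
qed

lemma goodstein_reaches_lead_digit:
  assumes "1 \<le> k" "goodstein k m = a * (k + 1)" "a \<le> k" "0 < a'" "a' \<le> a"
  shows "\<exists>j \<ge> k. goodstein j m = a' * (j + 1)"
  using assms
proof (induction a arbitrary: k)
  case 0
  then show ?case by simp
next
  case (Suc a)
  show ?case
  proof (cases "a' = Suc a")
    case True
    then show ?thesis using Suc.prems(2) by blast
  next
    case False
    have decreased: "goodstein (2 * k + 2) m = a * (2 * k + 2 + 1)"
      using goodstein_lead_digit_decrease[of k m "Suc a"] Suc.prems by (simp add: algebra_simps)
    obtain j where "2 * k + 2 \<le> j" "goodstein j m = a' * (j + 1)"
      using Suc.IH[of "2 * k + 2", OF _ decreased] Suc.prems False by auto
    then show ?thesis by (intro exI[of _ j]) simp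
  qed
qed

lemma goodstein_last_countdown:
  assumes "2 \<le> k" "goodstein k m = 2 * (k + 1)"
  shows "goodstein (4 * k + 5) m = 1" and "goodstein (4 * k + 6) m = 0"
proof -
  have "goodstein (2 * k + 2) m = 1 * (2 * k + 2 + 1)"
    using goodstein_lead_digit_decrease[of k m 2] assms by simp
  then have countdown: "goodstein i m = c" if "i = 2 * k + 2 + 1 + d" "c + d = 2 * k + 3" for i c d
    using goodstein_borrow_countdown[of "2 * k + 2" m 1 c d] that by simp
  show "goodstein (4 * k + 5) m = 1"
    by (rule countdown[where d = "2 * k + 2"]) simp_all
  show "goodstein (4 * k + 6) m = 0"
    by (rule countdown[where d = "2 * k + 3"]) simp_all
qed

lemma goodstein_first_zero:
  assumes "1 \<le> n" "goodstein n m = 0" "\<forall>k. 1 \<le> k \<and> k < n \<longrightarrow> goodstein k m \<noteq> 0"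
    and "1 \<le> l" "goodstein l m \<noteq> 0" "goodstein (l + 1) m = 0"
  shows "n = l + 1"
proof (rule antisym)
  show "n \<le> l + 1"
    using assms(3)[rule_format, of "l + 1"] assms(4,6) by (cases "n \<le> l + 1") auto
  show "l + 1 \<le> n"
    using goodstein_zero_stays[of n m l] assms(1,2,5) by (cases "l + 1 \<le> n") auto
qed

theorem lemma7:
  fixes m n :: nat
  assumes "4 \<le> m"
    and "1 \<le> n"
    and "goodstein n m = 0"
    and "\<forall>k. 1 \<le> k \<and> k < n \<longrightarrow> goodstein k m \<noteq> 0"
  shows "\<exists>n2. 2 \<le> n2 \<and> n = 2 * (2 * n2 + 1) \<and>
           hrep_of n2 (goodstein (n2 - 1) m) = HSum [(0, hrep_of n2 0), (2, hrep_of n2 1)]"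
proof -
  obtain K where K: "2 \<le> K" "goodstein K m = K * (K + 1) + K"
    using goodstein_enters_two_digits assms(1,3) by blast
  then have "goodstein (K + K) m = K * (K + 1 + K) + 0"
    by (intro goodstein_countdown) simp_all
  then have "goodstein (2 * K) m = K * (2 * K + 1)"
    by (simp add: mult_2 mult_2_right algebra_simps)
  then obtain j where j: "2 * K \<le> j" "goodstein j m = 2 * (j + 1)"
    using goodstein_reaches_lead_digit[of "2 * K" m K 2] K(1) by auto
  then have "n = 4 * j + 5 + 1"
    using goodstein_last_countdown[of j m] K(1)
    by (intro goodstein_first_zero[OF assms(2-4)]) (simp_all add: ac_simps)
  moreover have "hrep_of (j + 1) (goodstein j m) = HSum [(0, hrep_of (j + 1) 0), (2, hrep_of (j + 1) 1)]"
    using hrep_of_two_digits[of 2 "j + 1" 0] j K(1) by simp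
  ultimately show ?thesis using j K(1) by (intro exI[of _ "j + 1"]) simp
qed

end
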